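(* Let $r\ge 3$ be an integer and let $G$ be an $r$-regular graph of order $n$ with girth at least six. Then $\gamma_{rdR}(G)\le 2(n-r^2)+1$.
   Context: All graphs are finite and simple. An RDRD function of $G$ is a function $f:V(G)\to\{0,1,2,3\}$ such that every vertex with value $0$ has at least two neighbors with value $2$ or at least one neighbor with value $3$, every vertex with value $1$ has a neighbor with value $2$ or $3$, and the subgraph induced by the vertices with value $0$ has no isolated vertices; $\gamma_{rdR}(G)$ is the minimum of $\sum_v f(v)$ over RDRD functions. *)

theory Defs
  imports Main
begin

definition simple_graph :: "'a set \<Rightarrow> ('a \<Rightarrow> 'a \<Rightarrow> bool) \<Rightarrow> bool" where
  "simple_graph V E \<longleftrightarrow> finite V \<and> (\<forall>u v. E u v \<longrightarrow> u \<in> V \<and> v \<in> V)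
     \<and> (\<forall>u v. E u v \<longrightarrow> E v u) \<and> (\<forall>v. \<not> E v v)"

definition neighbors :: "'a set \<Rightarrow> ('a \<Rightarrow> 'a \<Rightarrow> bool) \<Rightarrow> 'a \<Rightarrow> 'a set" where
  "neighbors V E v = {u \<in> V. E v u}"

definition regular :: "'a set \<Rightarrow> ('a \<Rightarrow> 'a \<Rightarrow> bool) \<Rightarrow> nat \<Rightarrow> bool" where
  "regular V E r \<longleftrightarrow> (\<forall>v\<in>V. card (neighbors V E v) = r)"

definition is_cycle :: "'a set \<Rightarrow> ('a \<Rightarrow> 'a \<Rightarrow> bool) \<Rightarrow> 'a list \<Rightarrow> bool" where
  "is_cycle V E cs \<longleftrightarrow> length cs \<ge> 3 \<and> distinct cs \<and> set cs \<subseteq> V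
     \<and> (\<forall>i < length cs. E (cs ! i) (cs ! ((i + 1) mod length cs)))"

definition girth_at_least :: "'a set \<Rightarrow> ('a \<Rightarrow> 'a \<Rightarrow> bool) \<Rightarrow> nat \<Rightarrow> bool" where
  "girth_at_least V E g \<longleftrightarrow> (\<forall>cs. is_cycle V E cs \<longrightarrow> length cs \<ge> g)"

definition rdrd_function :: "'a set \<Rightarrow> ('a \<Rightarrow> 'a \<Rightarrow> bool) \<Rightarrow> ('a \<Rightarrow> nat) \<Rightarrow> bool" where
  "rdrd_function V E f \<longleftrightarrow>
     (\<forall>v\<in>V. f v \<le> 3)
   \<and> (\<forall>v\<in>V. f v = 0 \<longrightarrow>
        card {u \<in> neighbors V E v. f u = 2} \<ge> 2 \<or> (\<exists>u\<in>neighbors V E v. f u = 3))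
   \<and> (\<forall>v\<in>V. f v = 1 \<longrightarrow> (\<exists>u\<in>neighbors V E v. f u = 2 \<or> f u = 3))
   \<and> (\<forall>v\<in>V. f v = 0 \<longrightarrow> (\<exists>u\<in>neighbors V E v. f u = 0))"

definition gamma_rdR :: "'a set \<Rightarrow> ('a \<Rightarrow> 'a \<Rightarrow> bool) \<Rightarrow> nat" where
  "gamma_rdR V E = Min {(\<Sum>v\<in>V. f v) | f. rdrd_function V E f}"

end

theory Submission
  imports Defs
begin

text \<open>Fix a vertex v and let B be the closed ball of radius 2 around it. Since the girth is at
  least 5, B is a tree of depth 2 and has exactly 1 + r + r(r - 1) = 1 + r^2 vertices. Label v
  by 3, the rest of B by 0 and every vertex outside B by 2. A neighbour of v sees v; a vertex x
  at distance 2 from v is adjacent to its parent on the path to v (labelled 0), and because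
  there are no cycles of length 3, 4 or 5 its remaining r - 1 >= 2 neighbours lie outside B and
  are labelled 2. The weight of this labelling is 3 + 2(n - 1 - r^2).\<close>

lemma neighbors_iff: "u \<in> neighbors V E v \<longleftrightarrow> u \<in> V \<and> E v u"
  by (simp add: neighbors_def)

lemma simple_graph_adj_sym: "simple_graph V E \<Longrightarrow> E u v \<Longrightarrow> E v u"
  by (simp add: simple_graph_def)

lemma simple_graph_adj_irrefl: "simple_graph V E \<Longrightarrow> \<not> E v v"
  by (simp add: simple_graph_def)

lemma simple_graph_adj_in_V: "simple_graph V E \<Longrightarrow> E u v \<Longrightarrow> u \<in> V \<and> v \<in> V"
  by (simp add: simple_graph_def)

lemma finite_neighbors: "simple_graph V E \<Longrightarrow> finite (neighbors V E v)"
  by (simp add: simple_graph_def neighbors_def)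

lemma girth_no_triangle:
  assumes "girth_at_least V E g" "g > 3" "simple_graph V E" "E a b" "E b c" "E c a"
  shows False
proof -
  have "is_cycle V E [a, b, c]"
    using assms unfolding is_cycle_def simple_graph_def by (auto simp: less_Suc_eq)
  with assms(1,2) show False unfolding girth_at_least_def by fastforce
qed

lemma girth_no_4_cycle:
  assumes "girth_at_least V E g" "g > 4" "simple_graph V E"
    and "E a b" "E b c" "E c d" "E d a" "a \<noteq> c" "b \<noteq> d"
  shows False
proof -
  have "is_cycle V E [a, b, c, d]"
    using assms unfolding is_cycle_def simple_graph_def by (auto simp: less_Suc_eq)
  with assms(1,2) show False unfolding girth_at_least_def by fastforce
qed

lemma girth_no_5_cycle:
  assumes "girth_at_least V E g" "g > 5" "simple_graph V E"
    and "E a b" "E b c" "E c d" "E d e" "E e a" "distinct [a, b, c, d, e]"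
  shows False
proof -
  have "is_cycle V E [a, b, c, d, e]"
    using assms unfolding is_cycle_def simple_graph_def by (auto simp: less_Suc_eq)
  with assms(1,2) show False unfolding girth_at_least_def by fastforce
qed

lemma girth_at_least_mono: "girth_at_least V E g \<Longrightarrow> h \<le> g \<Longrightarrow> girth_at_least V E h"
  unfolding girth_at_least_def using le_trans by blast

definition ball2 :: "'a set \<Rightarrow> ('a \<Rightarrow> 'a \<Rightarrow> bool) \<Rightarrow> 'a \<Rightarrow> 'a set" where
  "ball2 V E v = insert v (neighbors V E v \<union> (\<Union>u\<in>neighbors V E v. neighbors V E u))"

lemma ball2_subset: "v \<in> V \<Longrightarrow> ball2 V E v \<subseteq> V"
  by (auto simp: ball2_def neighbors_def)

lemma card_ball2:
  assumes s: "simple_graph V E" and g: "girth_at_least V E 5"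
    and reg: "regular V E r" and vV: "v \<in> V"
  shows "card (ball2 V E v) = 1 + r\<^sup>2"
proof -
  define N where "N = neighbors V E v"
  define C where "C = (\<lambda>u. neighbors V E u - {v})"
  have finN: "finite N" and finC: "\<And>u. finite (C u)"
    using finite_neighbors[OF s] by (auto simp: N_def C_def)
  have cardN: "card N = r" using reg vV by (simp add: regular_def N_def)
  have cardC: "card (C u) = r - 1" if "u \<in> N" for u
  proof -
    have "v \<in> neighbors V E u" "u \<in> V"
      using that vV simple_graph_adj_sym[OF s] by (auto simp: N_def neighbors_iff)
    then show ?thesis
      using reg finite_neighbors[OF s] by (simp add: C_def regular_def card_Diff_singleton)
  qed
  have C_disjoint: "C u \<inter> C w = {}" if "u \<in> N" "w \<in> N" "u \<noteq> w" for u w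
  proof (rule ccontr)
    assume "C u \<inter> C w \<noteq> {}"
    then obtain x where "E u x" "E w x" "x \<noteq> v" by (auto simp: C_def neighbors_iff)
    with that show False
      using girth_no_4_cycle[OF g _ s, of v u x w] simple_graph_adj_sym[OF s]
      by (auto simp: N_def neighbors_iff)
  qed
  have N_C_disjoint: "N \<inter> (\<Union>u\<in>N. C u) = {}"
  proof (rule ccontr)
    assume "N \<inter> (\<Union>u\<in>N. C u) \<noteq> {}"
    then obtain u x where "u \<in> N" "x \<in> C u" "x \<in> N" by blast
    then have "E v u" "E u x" "E v x" by (auto simp: N_def C_def neighbors_iff)
    then show False using girth_no_triangle[OF g _ s, of v u x] simple_graph_adj_sym[OF s] by auto
  qed
  have v_notin: "v \<notin> N \<union> (\<Union>u\<in>N. C u)"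
    using simple_graph_adj_irrefl[OF s] by (auto simp: N_def C_def neighbors_iff)
  have ball: "ball2 V E v = insert v (N \<union> (\<Union>u\<in>N. C u))"
    by (auto simp: ball2_def N_def C_def)
  have "card (\<Union>u\<in>N. C u) = r * (r - 1)"
    using card_UN_disjoint[OF finN, of C] finC C_disjoint cardN cardC by simp
  then have "card (ball2 V E v) = 1 + r + r * (r - 1)"
    using ball v_notin card_Un_disjoint[OF finN _ N_C_disjoint] finN finC cardN by simp
  also have "\<dots> = 1 + r\<^sup>2"
    by (cases r) (auto simp: power2_eq_square)
  finally show ?thesis .
qed

lemma neighbors_outside_ball2:
  assumes s: "simple_graph V E" and g: "girth_at_least V E 6"
    and vu: "E v u" and ux: "E u x" and x: "x \<notin> insert v (neighbors V E v)"
    and xy: "E x y" and yu: "y \<noteq> u"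
  shows "y \<notin> ball2 V E v"
proof -
  note sym = simple_graph_adj_sym[OF s] and irr = simple_graph_adj_irrefl[OF s]
  have xv: "x \<noteq> v" and vx: "\<not> E v x"
    using x simple_graph_adj_in_V[OF s ux] by (auto simp: neighbors_iff)
  have yv: "y \<noteq> v" using xy vx sym by auto
  have vy: "\<not> E v y"
    using girth_no_4_cycle[OF g _ s, of v y x u] vu ux xy yu xv sym by auto
  have "\<not> E w y" if vw: "E v w" for w
  proof
    assume wy: "E w y"
    show False
    proof (cases "w = u")
      case True
      then show False using girth_no_triangle[OF g _ s, of u x y] ux xy wy sym by auto
    next
      case False
      have "distinct [v, u, x, y, w]"
        using False yu yv xv vx vy vu vw xy irr by auto
      then show False using girth_no_5_cycle[OF g _ s, of v u x y w] vu ux xy wy vw sym by auto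
    qed
  qed
  then show ?thesis using yv vy by (auto simp: ball2_def neighbors_iff)
qed

definition ball2_labelling :: "'a set \<Rightarrow> ('a \<Rightarrow> 'a \<Rightarrow> bool) \<Rightarrow> 'a \<Rightarrow> 'a \<Rightarrow> nat" where
  "ball2_labelling V E v x = (if x = v then 3 else if x \<in> ball2 V E v then 0 else 2)"

lemma ball2_cases [consumes 2, case_names near far]:
  assumes "x \<in> ball2 V E v" "x \<noteq> v"
  obtains "E v x" | u where "E v u" "E u x" "\<not> E v x"
  using assms by (cases "E v x") (auto simp: ball2_def neighbors_iff)

lemma ball2_labelling_zero_iff: "ball2_labelling V E v x = 0 \<longleftrightarrow> x \<in> ball2 V E v \<and> x \<noteq> v"
  by (simp add: ball2_labelling_def)

lemma ball2_labelling_zero_has_zero_neighbor: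
  assumes s: "simple_graph V E" and reg: "regular V E r" and r: "r \<ge> 2"
    and vV: "v \<in> V" and xV: "x \<in> V" and x0: "ball2_labelling V E v x = 0"
  shows "\<exists>u\<in>neighbors V E x. ball2_labelling V E v u = 0"
proof -
  note sym = simple_graph_adj_sym[OF s]
  from x0 have "x \<in> ball2 V E v" "x \<noteq> v" by (simp_all add: ball2_labelling_zero_iff)
  then show ?thesis
  proof (cases rule: ball2_cases)
    case near
    then have "card (neighbors V E x - {v}) = r - 1"
      using reg xV vV sym finite_neighbors[OF s]
      by (simp add: regular_def card_Diff_singleton neighbors_iff)
    with r have "card (neighbors V E x - {v}) \<noteq> 0" by simp
    then obtain y where y: "y \<in> neighbors V E x - {v}" by (metis card.empty ex_in_conv)
    with near xV have "y \<in> ball2 V E v" by (auto simp: ball2_def neighbors_iff)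
    with y show ?thesis by (auto simp: ball2_labelling_zero_iff)
  next
    case (far u)
    then have "u \<in> neighbors V E x" "u \<in> ball2 V E v" "u \<noteq> v"
      using simple_graph_adj_in_V[OF s] sym by (auto simp: ball2_def neighbors_iff)
    then show ?thesis by (auto simp: ball2_labelling_zero_iff)
  qed
qed

lemma ball2_labelling_zero_dominated:
  assumes s: "simple_graph V E" and g: "girth_at_least V E 6"
    and reg: "regular V E r" and r: "r \<ge> 3"
    and vV: "v \<in> V" and xV: "x \<in> V" and x0: "ball2_labelling V E v x = 0"
  shows "2 \<le> card {u \<in> neighbors V E x. ball2_labelling V E v u = 2}
    \<or> (\<exists>u\<in>neighbors V E x. ball2_labelling V E v u = 3)"
proof -
  let ?f = "ball2_labelling V E v"
  note sym = simple_graph_adj_sym[OF s]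
  from x0 have "x \<in> ball2 V E v" and xv: "x \<noteq> v" by (simp_all add: ball2_labelling_zero_iff)
  then show ?thesis
  proof (cases rule: ball2_cases)
    case near
    then have "v \<in> neighbors V E x" using vV sym by (simp add: neighbors_iff)
    then show ?thesis by (auto simp: ball2_labelling_def)
  next
    case (far u)
    have "neighbors V E x - {u} \<subseteq> {y \<in> neighbors V E x. ?f y = 2}"
    proof
      fix y assume y: "y \<in> neighbors V E x - {u}"
      have "x \<notin> insert v (neighbors V E v)" using far xv by (simp add: neighbors_iff)
      then have "y \<notin> ball2 V E v" "y \<noteq> v"
        using neighbors_outside_ball2[OF s g far(1,2)] y by (auto simp: ball2_def neighbors_iff)
      with y show "y \<in> {y \<in> neighbors V E x. ?f y = 2}" by (simp add: ball2_labelling_def)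
    qed
    moreover have "card (neighbors V E x - {u}) = r - 1"
      using far reg xV finite_neighbors[OF s] simple_graph_adj_in_V[OF s] sym
      by (simp add: regular_def card_Diff_singleton neighbors_iff)
    moreover have "finite {y \<in> neighbors V E x. ?f y = 2}" using finite_neighbors[OF s] by simp
    ultimately have "r - 1 \<le> card {y \<in> neighbors V E x. ?f y = 2}" by (metis card_mono)
    with r show ?thesis by linarith
  qed
qed

lemma rdrd_ball2_labelling:
  assumes s: "simple_graph V E" and g: "girth_at_least V E 6"
    and reg: "regular V E r" and r: "r \<ge> 3" and vV: "v \<in> V"
  shows "rdrd_function V E (ball2_labelling V E v)"
  unfolding rdrd_function_def
  using ball2_labelling_zero_has_zero_neighbor[OF s reg _ vV]
    ball2_labelling_zero_dominated[OF s g reg r vV] r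
  by (auto simp: ball2_labelling_def)

lemma sum_ball2_labelling:
  assumes "finite V" "v \<in> V"
  shows "(\<Sum>x\<in>V. ball2_labelling V E v x) = 3 + 2 * card (V - ball2 V E v)"
proof -
  let ?B = "ball2 V E v" and ?f = "ball2_labelling V E v"
  have BV: "?B \<subseteq> V" using assms(2) by (rule ball2_subset)
  have "(\<Sum>x\<in>?B. ?f x) = ?f v + (\<Sum>x\<in>?B - {v}. ?f x)"
    using finite_subset[OF BV assms(1)] by (intro sum.remove) (auto simp: ball2_def)
  also have "\<dots> = 3" by (simp add: ball2_labelling_def)
  finally have "(\<Sum>x\<in>?B. ?f x) = 3" .
  moreover have "(\<Sum>x\<in>V - ?B. ?f x) = (\<Sum>x\<in>V - ?B. 2)"
    by (rule sum.cong) (auto simp: ball2_labelling_def ball2_def)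
  ultimately show ?thesis
    using sum.subset_diff[OF BV assms(1), of ?f] by simp
qed

lemma gamma_rdR_le:
  assumes "finite V" "rdrd_function V E f"
  shows "gamma_rdR V E \<le> (\<Sum>v\<in>V. f v)"
proof -
  have "{(\<Sum>v\<in>V. h v) | h. rdrd_function V E h} \<subseteq> {..3 * card V}"
  proof clarify
    fix h assume "rdrd_function V E h"
    then have "(\<Sum>v\<in>V. h v) \<le> (\<Sum>v\<in>V. 3)" by (intro sum_mono) (simp add: rdrd_function_def)
    then show "(\<Sum>v\<in>V. h v) \<le> 3 * card V" by simp
  qed
  then show ?thesis
    unfolding gamma_rdR_def using assms(2) by (intro Min_le) (auto intro: finite_subset)
qed

theorem proposition2p6:
  fixes V :: "'a set" and E :: "'a \<Rightarrow> 'a \<Rightarrow> bool" and r n :: nat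
  assumes "simple_graph V E"
    and "V \<noteq> {}"
    and "r \<ge> 3"
    and "regular V E r"
    and "card V = n"
    and "girth_at_least V E 6"
  shows "int (gamma_rdR V E) \<le> 2 * (int n - int r ^ 2) + 1"
proof -
  obtain v where v: "v \<in> V" using assms(2) by auto
  have fin: "finite V" using assms(1) by (simp add: simple_graph_def)
  have ball_sub: "ball2 V E v \<subseteq> V" using v by (rule ball2_subset)
  have "girth_at_least V E 5" using assms(6) by (rule girth_at_least_mono) simp
  then have ball: "card (ball2 V E v) = 1 + r\<^sup>2"
    using card_ball2[OF assms(1) _ assms(4) v] by simp
  have ball_le: "1 + r\<^sup>2 \<le> n"
    using card_mono[OF fin ball_sub] ball assms(5) by simp
  have "gamma_rdR V E \<le> 3 + 2 * card (V - ball2 V E v)"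
    using gamma_rdR_le[OF fin rdrd_ball2_labelling[OF assms(1,6,4,3) v]]
    by (simp add: sum_ball2_labelling[OF fin v])
  also have "card (V - ball2 V E v) = n - (1 + r\<^sup>2)"
    using card_Diff_subset[OF finite_subset[OF ball_sub fin] ball_sub]
      ball assms(5) by simp
  finally have "int (gamma_rdR V E) \<le> int (3 + 2 * (n - (1 + r\<^sup>2)))" by simp
  also have "\<dots> = 3 + 2 * (int n - (1 + int r ^ 2))" using ball_le by (simp add: of_nat_diff)
  finally show ?thesis by simp
qed

end
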